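(* Let $q>0$. Then the function $\mathcal{E}_q^z$ is analytic in the disc $|z|<R_q$, where $$R_q=\begin{cases}\dfrac{2}{1-q}, & 0<q<1,\\[1ex] \dfrac{2q}{q-1}, & q>1,\\[1ex] \infty, & q=1,\end{cases}$$ and for $|z|<R_q$ $$\mathcal{E}_q^z=\sum_{n=0}^\infty \frac{z^n}{\{n\}!},$$ where, for $q\neq1$, $\{n\}:=\dfrac{1+q+\dots+q^{n-1}}{\frac12(1+q^{n-1})}=\dfrac{2(1-q^n)}{(1-q)(1+q^{n-1})}$ (and $\{n\}:=n$ for $q=1$), and $\{n\}!:=\{1\}\{2\}\cdots\{n\}$, $\{0\}!:=1$.
   Context: For $q>0$ and integers $k\ge1$ let $[k]=1+q+\dots+q^{k-1}$, $[n]!=[1][2]\cdots[n]$, $[0]!=1$. The standard $q$-exponentials are $e_q^z=\sum_{n\ge0} z^n/[n]!$ and $E_q^z=\sum_{n\ge0} q^{n(n-1)/2}z^n/[n]!$, defined by these power series on their discs of convergence and extended meromorphically to $\mathbb{C}$; for $0<q<1$ one has $e_q^z=\prod_{k\ge0}(1-(1-q)q^kz)^{-1}$ and $E_q^z=\prod_{k\ge0}(1+(1-q)q^kz)$, and in general $E_q^z=e_{1/q}^z$; for $q=1$ both equal $e^z$. The improved $q$-exponential is $\mathcal{E}_q^z:=e_q^{z/2}E_q^{z/2}$ (a meromorphic function of $z$); for $0<q<1$, $\mathcal{E}_q^z=\prod_{k\ge0}\frac{1+q^k(1-q)\frac z2}{1-q^k(1-q)\frac z2}$. *)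

theory Defs
  imports "HOL-Analysis.Analysis"
begin

definition qint :: "real \<Rightarrow> nat \<Rightarrow> real" where
  "qint q k = (\<Sum>i<k. q ^ i)"

definition qfact :: "real \<Rightarrow> nat \<Rightarrow> real" where
  "qfact q n = (\<Prod>k\<in>{1..n}. qint q k)"

text \<open>e_q^z as its power series (on its disc of convergence)\<close>
definition e_q :: "real \<Rightarrow> complex \<Rightarrow> complex" where
  "e_q q z = (\<Sum>n. z ^ n / complex_of_real (qfact q n))"

text \<open>E_q^z as its power series (on its disc of convergence)\<close>
definition E_q :: "real \<Rightarrow> complex \<Rightarrow> complex" where
  "E_q q z = (\<Sum>n. complex_of_real (q ^ (n * (n - 1) div 2)) * z ^ n / complex_of_real (qfact q n))"

text \<open>improved q-exponential: e_q^(z/2) E_q^(z/2)\<close>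
definition impexp :: "real \<Rightarrow> complex \<Rightarrow> complex" where
  "impexp q z = e_q q (z / 2) * E_q q (z / 2)"

definition qbrace :: "real \<Rightarrow> nat \<Rightarrow> real" where
  "qbrace q n = (if q = 1 then real n else qint q n / ((1 + q ^ (n - 1)) / 2))"

definition qbrace_fact :: "real \<Rightarrow> nat \<Rightarrow> real" where
  "qbrace_fact q n = (\<Prod>k\<in>{1..n}. qbrace q k)"

definition disc_q :: "real \<Rightarrow> complex set" where
  "disc_q q = (if q = 1 then UNIV
               else if q < 1 then ball 0 (2 / (1 - q))
               else ball 0 (2 * q / (q - 1)))"

end

theory Submission imports Defs begin

(* The coefficients q^C(n,2)/[n]! of E_q are the coefficients 1/[n]_{1/q}! of
   e_{1/q}, and the coefficient ratio [n+1] of e_q tends to 1/(1-q) (q < 1) or to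
   infinity (q >= 1).  So |z| < R_q is the disc on which both series, taken at
   w = z/2, converge absolutely; there their Cauchy product converges to
   e_q^w E_q^w, and its n-th coefficient is evaluated by the q-binomial theorem
     sum_k q^C(k,2) [n]!/([k]![n-k]!) = prod_{j<n} (1 + q^j),
   which turns w^n/[n]! times this product into z^n/{n}!.  Analyticity holds
   because a power series converging on a disc is analytic on it. *)

lemma powser_analytic_on_eball:
  fixes c :: "nat \<Rightarrow> complex"
  assumes sums: "\<And>z. z \<in> eball 0 R \<Longrightarrow> (\<lambda>n. c n * z ^ n) sums f z"
  shows "f analytic_on eball 0 R"
proof -
  have "R \<le> conv_radius c"
  proof (rule conv_radius_geI_ex')
    fix r :: real assume "0 < r" "ereal r < R"
    then have "complex_of_real r \<in> eball 0 R" by simp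
    then show "summable (\<lambda>n. c n * complex_of_real r ^ n)"
      using sums sums_summable by blast
  qed
  then have "eval_fps (Abs_fps c) analytic_on eball 0 R"
    by (intro analytic_on_eval_fps) (simp add: fps_conv_radius_def eball_mono)
  moreover have "eval_fps (Abs_fps c) z = f z" if "z \<in> eball 0 R" for z
    using sums[OF that] unfolding eval_fps_def fps_nth_Abs_fps by (rule sums_unique[symmetric])
  ultimately show ?thesis
    using holomorphic_cong analytic_on_open open_eball by metis
qed

lemma half_less_ereal: "ereal a < ereal 2 * m \<Longrightarrow> ereal (a / 2) < m"
  by (cases m) auto

section \<open>q-integers and q-factorials\<close>

lemma qint_0 [simp]: "qint q 0 = 0"
  by (simp add: qint_def)

lemma qint_Suc: "qint q (Suc n) = qint q n + q ^ n"
  by (simp add: qint_def)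

lemma qint_Suc_left: "qint q (Suc n) = 1 + q * qint q n"
  unfolding qint_def sum.lessThan_Suc_shift by (simp add: sum_distrib_left)

lemma qint_add: "qint q (k + d) = qint q k + q ^ k * qint q d"
  by (induction d) (auto simp: qint_Suc power_add algebra_simps)

lemma qint_pos: "q > 0 \<Longrightarrow> k \<ge> 1 \<Longrightarrow> qint q k > 0"
  unfolding qint_def by (intro sum_pos) (auto simp: Suc_le_eq)

lemma qint_ge_of_nat: "q \<ge> 1 \<Longrightarrow> qint q k \<ge> real k"
proof (induction k)
  case (Suc k)
  have "1 \<le> q ^ k" using Suc.prems by (rule one_le_power)
  with Suc show ?case unfolding qint_Suc of_nat_Suc by linarith
qed simp

lemma qint_geom: "q \<noteq> 1 \<Longrightarrow> qint q n = (1 - q ^ n) / (1 - q)"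
  unfolding qint_def by (metis sum_gp_strict)

lemma qint_inv: "q > 0 \<Longrightarrow> qint q (Suc k) = q ^ k * qint (1/q) (Suc k)"
proof (induction k)
  case (Suc k)
  have "qint q (Suc (Suc k)) = 1 + q * (q ^ k * qint (1/q) (Suc k))"
    using Suc by (simp add: qint_Suc_left)
  also have "\<dots> = q ^ Suc k * qint (1/q) (Suc (Suc k))"
    using Suc.prems by (simp add: qint_Suc power_divide field_simps)
  finally show ?case .
qed (simp add: qint_def)

lemma qfact_0 [simp]: "qfact q 0 = 1"
  by (simp add: qfact_def)

lemma qfact_Suc: "qfact q (Suc n) = qfact q n * qint q (Suc n)"
  by (simp add: qfact_def prod.nat_ivl_Suc' mult.commute)

lemma qfact_pos: "q > 0 \<Longrightarrow> qfact q n > 0"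
  by (induction n) (auto simp: qfact_Suc qint_pos)

lemma binom2_Suc: "Suc n * (Suc n - 1) div 2 = n * (n - 1) div 2 + n"
proof -
  have "Suc n * n = n * (n - 1) + 2 * n" by (cases n) (auto simp: algebra_simps)
  then show ?thesis by simp
qed

lemma power_binom2_Suc: "(x :: 'a :: monoid_mult) ^ (Suc n * (Suc n - 1) div 2) = x ^ (n * (n - 1) div 2) * x ^ n"
  by (simp only: binom2_Suc power_add)

text \<open>Inversion for factorials: [n]_q! = q^C(n,2) [n]_{1/q}!, so E_q = e_{1/q} coefficientwise.\<close>
lemma qfact_inv: "q > 0 \<Longrightarrow> qfact q n = q ^ (n * (n - 1) div 2) * qfact (1/q) n"
proof (induction n)
  case (Suc n)
  have "qfact q (Suc n) = q ^ (n * (n - 1) div 2) * qfact (1/q) n * (q ^ n * qint (1/q) (Suc n))"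
    using Suc by (simp only: qfact_Suc qint_inv)
  also have "\<dots> = q ^ (Suc n * (Suc n - 1) div 2) * qfact (1/q) (Suc n)"
    by (simp only: power_binom2_Suc qfact_Suc[of "1/q" n] mult_ac)
  finally show ?case .
qed simp

section \<open>The q-binomial theorem\<close>

definition rothe_sum :: "real \<Rightarrow> real \<Rightarrow> nat \<Rightarrow> real" where
  "rothe_sum q x n = (\<Sum>k\<le>n. q ^ (k * (k - 1) div 2) * x ^ k / (qfact q k * qfact q (n - k)))"

text \<open>Splitting [n+1] = [k] + q^k [n+1-k] in each summand yields the recursion
  [n+1] S_{n+1}(x) = (1 + x) S_n(qx): the first parts give x S_n(qx), the second S_n(qx).\<close>
lemma rothe_sum_Suc:
  assumes q: "q > 0"
  shows "qint q (Suc n) * rothe_sum q x (Suc n) = (1 + x) * rothe_sum q (q * x) n"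
proof -
  define c where "c k = q ^ (k * (k - 1) div 2) * x ^ k / (qfact q k * qfact q (Suc n - k))" for k
  define T where "T k = q ^ (k * (k - 1) div 2) * (q * x) ^ k / (qfact q k * qfact q (n - k))" for k
  have split_qint: "qint q (Suc n) * c k = qint q k * c k + q ^ k * qint q (Suc n - k) * c k"
    if "k \<le> Suc n" for k
    using that qint_add[of q k "Suc n - k"] by (simp add: algebra_simps)
  have first_parts: "(\<Sum>k\<le>Suc n. qint q k * c k) = x * rothe_sum q (q * x) n"
  proof -
    have shifted: "qint q (Suc j) * c (Suc j) = x * T j" if "j \<le> n" for j
      unfolding c_def T_def power_binom2_Suc
      using that qfact_pos[OF q, of j] qfact_pos[OF q, of "n - j"] qint_pos[OF q, of "Suc j"]
      by (simp add: qfact_Suc power_mult_distrib field_simps)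
    have "(\<Sum>k\<le>Suc n. qint q k * c k) = (\<Sum>j\<le>n. qint q (Suc j) * c (Suc j))"
      by (simp only: sum.atMost_Suc_shift) simp
    also have "\<dots> = (\<Sum>j\<le>n. x * T j)"
      by (rule sum.cong) (simp_all add: shifted)
    finally show ?thesis
      by (simp add: rothe_sum_def T_def sum_distrib_left)
  qed
  have second_parts: "(\<Sum>k\<le>Suc n. q ^ k * qint q (Suc n - k) * c k) = rothe_sum q (q * x) n"
  proof -
    have "q ^ j * qint q (Suc n - j) * c j = T j" if "j \<le> n" for j
    proof -
      have "Suc n - j = Suc (n - j)" using that by simp
      then show ?thesis
        using qfact_pos[OF q, of j] qfact_pos[OF q, of "n - j"] qint_pos[OF q, of "Suc (n - j)"]
        by (simp add: c_def T_def qfact_Suc power_mult_distrib field_simps)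
    qed
    then show ?thesis by (simp add: c_def rothe_sum_def T_def)
  qed
  have "qint q (Suc n) * rothe_sum q x (Suc n) = (\<Sum>k\<le>Suc n. qint q (Suc n) * c k)"
    unfolding rothe_sum_def c_def sum_distrib_left ..
  also have "\<dots> = (\<Sum>k\<le>Suc n. qint q k * c k + q ^ k * qint q (Suc n - k) * c k)"
    by (rule sum.cong) (simp_all add: split_qint)
  also have "\<dots> = x * rothe_sum q (q * x) n + rothe_sum q (q * x) n"
    by (simp only: sum.distrib first_parts second_parts)
  finally show ?thesis by (simp add: algebra_simps)
qed

theorem q_binomial:
  assumes q: "q > 0"
  shows "qfact q n * rothe_sum q x n = (\<Prod>j<n. 1 + q ^ j * x)"
proof (induction n arbitrary: x)
  case 0
  then show ?case by (simp add: rothe_sum_def)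
next
  case (Suc n)
  have "qfact q (Suc n) * rothe_sum q x (Suc n) = (1 + x) * (qfact q n * rothe_sum q (q * x) n)"
    using rothe_sum_Suc[OF q, of n x] by (simp add: qfact_Suc)
  also have "\<dots> = (1 + x) * (\<Prod>j<n. 1 + q ^ j * (q * x))"
    by (simp only: Suc)
  also have "\<dots> = (\<Prod>j<Suc n. 1 + q ^ j * x)"
    unfolding prod.lessThan_Suc_shift by (simp add: mult.assoc mult.commute mult.left_commute)
  finally show ?case .
qed

text \<open>The case x = 1, written as the Cauchy product coefficient of e_q and E_q.\<close>
corollary convolution_e_E:
  assumes q: "q > 0"
  shows "(\<Sum>i\<le>k. q ^ ((k - i) * (k - i - 1) div 2) / (qfact q i * qfact q (k - i)))
         = (\<Prod>j<k. 1 + q ^ j) / qfact q k"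
proof -
  have "(\<Sum>i\<le>k. q ^ ((k - i) * (k - i - 1) div 2) / (qfact q i * qfact q (k - i)))
        = rothe_sum q 1 k"
    unfolding rothe_sum_def atLeast0AtMost[symmetric]
    by (subst sum.atLeastAtMost_rev) (auto intro!: sum.cong simp: mult.commute)
  also have "\<dots> = (\<Prod>j<k. 1 + q ^ j) / qfact q k"
    using q_binomial[OF q, of k 1] qfact_pos[OF q, of k] by (simp add: field_simps)
  finally show ?thesis .
qed

lemma qbrace_fact_eq: "qbrace_fact q n = qfact q n * 2 ^ n / (\<Prod>j<n. 1 + q ^ j)"
proof (induction n)
  case (Suc n)
  have "qbrace_fact q (Suc n) = qbrace_fact q n * qbrace q (Suc n)"
    by (simp add: qbrace_fact_def prod.nat_ivl_Suc' mult.commute)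
  moreover have "qbrace q (Suc n) = 2 * qint q (Suc n) / (1 + q ^ n)"
    by (auto simp: qbrace_def qint_def)
  ultimately show ?case using Suc by (simp add: qfact_Suc)
qed (simp add: qbrace_fact_def)

section \<open>Radii of convergence\<close>

definition e_radius :: "real \<Rightarrow> ereal" where
  "e_radius q = (if q < 1 then ereal (1 / (1 - q)) else \<infinity>)"

lemma qint_Suc_tendsto:
  assumes q: "q > 0"
  shows "(\<lambda>n. ereal (qint q (Suc n))) \<longlonglongrightarrow> e_radius q"
proof (cases "q < 1")
  case True
  have "(\<lambda>n. (1 - q ^ Suc n) / (1 - q)) \<longlonglongrightarrow> (1 - 0) / (1 - q)"
    using LIMSEQ_power_zero[of q] q True
    by (intro tendsto_intros) (auto intro: LIMSEQ_Suc)
  then show ?thesis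
    using True by (simp add: e_radius_def qint_geom)
next
  case False
  have "real n \<le> qint q (Suc n)" for n
    using False qint_ge_of_nat[of q "Suc n"] by simp
  then have "filterlim (\<lambda>n. qint q (Suc n)) at_top sequentially"
    by (intro filterlim_at_top_mono[OF filterlim_real_sequentially] always_eventually) simp
  then show ?thesis
    using False by (simp add: e_radius_def tendsto_PInfty_eq_at_top)
qed

text \<open>Ratio test: the consecutive coefficient ratio of e_q is [n+1].\<close>
lemma conv_radius_e_q:
  assumes q: "q > 0"
  shows "conv_radius (\<lambda>n. complex_of_real (1 / qfact q n)) = e_radius q"
proof (rule conv_radius_ratio_limit_ereal)
  show "\<forall>\<^sub>F n in sequentially. complex_of_real (1 / qfact q n) \<noteq> 0"
    using qfact_pos[OF q] by (intro always_eventually) (simp add: less_imp_neq[symmetric])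
  have "norm (complex_of_real (1 / qfact q n)) / norm (complex_of_real (1 / qfact q (Suc n)))
        = qint q (Suc n)" for n
    using qfact_pos[OF q, of n] qint_pos[OF q, of "Suc n"] unfolding norm_of_real
    by (simp add: qfact_Suc)
  then show "(\<lambda>n. ereal (norm (complex_of_real (1 / qfact q n)) /
                         norm (complex_of_real (1 / qfact q (Suc n))))) \<longlonglongrightarrow> e_radius q"
    using qint_Suc_tendsto[OF q] by simp
qed

lemma E_q_term:
  assumes q: "q > 0"
  shows "complex_of_real (q ^ (n * (n - 1) div 2)) * w ^ n / complex_of_real (qfact q n)
         = complex_of_real (1 / qfact (1/q) n) * w ^ n"
  using q qfact_pos[of "1/q" n] by (simp add: qfact_inv[OF q, of n])

lemma disc_q_eq:
  assumes q: "q > 0"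
  shows "disc_q q = eball 0 (2 * min (e_radius q) (e_radius (1/q)))"
proof -
  consider "q < 1" | "q = 1" | "q > 1" by linarith
  then show ?thesis
  proof cases
    case 1
    then show ?thesis using q by (simp add: disc_q_def e_radius_def field_simps)
  next
    case 2
    then show ?thesis by (simp add: disc_q_def e_radius_def)
  next
    case 3
    then have "2 / (1 - 1 / q) = 2 * q / (q - 1)" by (simp add: field_simps)
    then show ?thesis using 3 q by (simp add: disc_q_def e_radius_def)
  qed
qed

text \<open>Cauchy product of the series of e_q and E_q at w = z/2; absolute convergence of both
  factors comes from the radii of convergence, the coefficients from the q-binomial theorem.\<close>
lemma impexp_sums:
  assumes q: "q > 0" and z: "z \<in> disc_q q"
  shows "(\<lambda>n. z ^ n / complex_of_real (qbrace_fact q n)) sums impexp q z"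
proof -
  define w where "w = z / 2"
  define a where "a n = w ^ n / complex_of_real (qfact q n)" for n
  define b where "b n = complex_of_real (q ^ (n * (n - 1) div 2)) * w ^ n / complex_of_real (qfact q n)" for n
  have "ereal (norm z) < ereal 2 * min (e_radius q) (e_radius (1/q))"
    using z unfolding disc_q_eq[OF q] by simp
  then have w: "ereal (norm w) < e_radius q" "ereal (norm w) < e_radius (1/q)"
    unfolding w_def norm_divide by (auto dest: half_less_ereal)
  have "summable (\<lambda>n. norm (a n))"
    using abs_summable_in_conv_radius[where f = "\<lambda>n. complex_of_real (1 / qfact q n)" and z = w]
      conv_radius_e_q[OF q] w(1)
    by (simp add: a_def mult.commute)
  moreover have "summable (\<lambda>n. norm (b n))"
    using abs_summable_in_conv_radius[where f = "\<lambda>n. complex_of_real (1 / qfact (1/q) n)" and z = w]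
      conv_radius_e_q[of "1/q"] w(2) q
    unfolding b_def E_q_term[OF q] by simp
  ultimately have "(\<lambda>k. \<Sum>i\<le>k. a i * b (k - i)) sums ((\<Sum>k. a k) * (\<Sum>k. b k))"
    by (rule Cauchy_product_sums)
  also have "(\<Sum>k. a k) * (\<Sum>k. b k) = impexp q z"
    unfolding impexp_def e_q_def E_q_def a_def b_def w_def ..
  also have "(\<lambda>k. \<Sum>i\<le>k. a i * b (k - i)) = (\<lambda>k. z ^ k / complex_of_real (qbrace_fact q k))"
  proof
    fix k
    have coeff: "a i * b (k - i) = w ^ k *
            complex_of_real (q ^ ((k - i) * (k - i - 1) div 2) / (qfact q i * qfact q (k - i)))"
      if "i \<le> k" for i
    proof -
      have "w ^ k = w ^ i * w ^ (k - i)" using that by (simp flip: power_add)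
      then show ?thesis by (simp add: a_def b_def)
    qed
    have "(\<Sum>i\<le>k. a i * b (k - i)) = (\<Sum>i\<le>k. w ^ k *
            complex_of_real (q ^ ((k - i) * (k - i - 1) div 2) / (qfact q i * qfact q (k - i))))"
      by (intro sum.cong refl coeff) simp
    also have "\<dots> = w ^ k * complex_of_real ((\<Prod>j<k. 1 + q ^ j) / qfact q k)"
      by (simp only: sum_distrib_left[symmetric] of_real_sum[symmetric] convolution_e_E[OF q])
    also have "\<dots> = z ^ k / complex_of_real (qbrace_fact q k)"
      using qfact_pos[OF q, of k] prod_pos[of "{..<k}" "\<lambda>j. 1 + q ^ j"] q
      by (simp add: qbrace_fact_eq w_def power_divide field_simps add_pos_pos)
    finally show "(\<Sum>i\<le>k. a i * b (k - i)) = z ^ k / complex_of_real (qbrace_fact q k)" .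
  qed
  finally show ?thesis .
qed

theorem theorem1:
  fixes q :: real
  assumes "q > 0"
  shows "impexp q analytic_on disc_q q \<and>
         (\<forall>z \<in> disc_q q. (\<lambda>n. z ^ n / complex_of_real (qbrace_fact q n)) sums impexp q z)"
proof
  show sums: "\<forall>z \<in> disc_q q. (\<lambda>n. z ^ n / complex_of_real (qbrace_fact q n)) sums impexp q z"
    using impexp_sums[OF assms] by blast
  have disc: "disc_q q = eball 0 (2 * min (e_radius q) (e_radius (1/q)))"
    by (rule disc_q_eq[OF assms])
  have "(\<lambda>n. complex_of_real (1 / qbrace_fact q n) * z ^ n) sums impexp q z"
    if "z \<in> eball 0 (2 * min (e_radius q) (e_radius (1/q)))" for z
    using sums that unfolding disc by (simp add: mult.commute)
  then show "impexp q analytic_on disc_q q"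
    unfolding disc by (rule powser_analytic_on_eball)
qed

end
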